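(* In the Mahi-Mahi protocol, if an honest validator commits some block $b$ in a leader slot $s$, then no other honest validator decides to directly skip the slot $s$.
   Context: Setting: $n=3f+1$ validators, at most $f$ Byzantine; honest validators create exactly one block per round, Byzantine ones may equivocate. Each valid block of round $r$ references (parents) at least $2f+1$ blocks of round $r-1$. Each validator has a local DAG of valid blocks, containing a block only with all its causal history. A block $b$ of round $r'$ is a vote for a block $L$ of round $r<r'$ with author $a$ if the first block with author $a$ and round $r$ met in the deterministic depth-first search from $b$ along parent references is $L$. With wave length $w\in\{4,5\}$, a block of round $r+w-1$ is a certificate for a block $L$ of round $r$ if at least $2f+1$ of its parents are votes for $L$. Leader slots of round $r$ are pairs (validator, $r$) chosen by a global common coin, identical for all validators, totally ordered. A validator classifies slots: direct skip if its local DAG has $2f+1$ blocks of round $r+w-2$ that are not votes for the block $L$ in the slot; direct commit of $L$ if it has $2f+1$ round-$(r+w-1)$ certificates for $L$; otherwise an indirect rule: with anchor the first non-skipped slot of round $>r+w-1$, if the anchor is committed with $A$, commit $L$ if there is a certificate $c$ for $L$ with a path from $A$ to $c$, else skip; if the anchor is undecided, the slot is undecided. (In particular, a slot is only committed with $L$ if the validator's DAG contains a certificate for $L$.) *)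

theory Defs
  imports Main "HOL-Library.Product_Lexorder"
begin

text \<open>Since references are (collision-free) hashes, we identify
a reference with the referenced block itself; two blocks with the same author and round but
different payload or parents are an equivocation.\<close>

datatype ('v, 'p) block =
  Block (author: 'v) (round: nat) (payload: 'p) (parents: "('v, 'p) block list")

fun first_some :: "'a option list \<Rightarrow> 'a option" where
  "first_some [] = None"
| "first_some (Some x # xs) = Some x"
| "first_some (None # xs) = first_some xs"

fun first_met :: "'v \<Rightarrow> nat \<Rightarrow> ('v, 'p) block \<Rightarrow> ('v, 'p) block option" where
  "first_met a r (Block v k p ps) =
     (if v = a \<and> k = r then Some (Block v k p ps)
      else first_some (map (first_met a r) ps))"

definition quorum :: "nat \<Rightarrow> ('v, 'p) block set \<Rightarrow> bool" where
  "quorum f S \<longleftrightarrow> 2 * f + 1 \<le> card (author ` S)"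

definition valid_block :: "'v set \<Rightarrow> nat \<Rightarrow> ('v, 'p) block \<Rightarrow> bool" where
  "valid_block V f b \<longleftrightarrow>
     author b \<in> V \<and>
     (round b = 0 \<longrightarrow> parents b = []) \<and>
     (0 < round b \<longrightarrow> (\<forall>p \<in> set (parents b). round p = round b - 1)
                      \<and> quorum f (set (parents b)))"

definition local_dag :: "'v set \<Rightarrow> nat \<Rightarrow> ('v, 'p) block set \<Rightarrow> bool" where
  "local_dag V f D \<longleftrightarrow> finite D \<and> (\<forall>b \<in> D. valid_block V f b \<and> set (parents b) \<subseteq> D)"

definition is_vote :: "('v, 'p) block \<Rightarrow> ('v, 'p) block \<Rightarrow> bool" where
  "is_vote b L \<longleftrightarrow> round L < round b \<and> first_met (author L) (round L) b = Some L"

definition is_cert :: "nat \<Rightarrow> nat \<Rightarrow> ('v, 'p) block \<Rightarrow> ('v, 'p) block \<Rightarrow> bool" where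
  "is_cert f w c L \<longleftrightarrow>
     round c = round L + w - 1 \<and> quorum f {p \<in> set (parents c). is_vote p L}"

definition reaches :: "('v, 'p) block \<Rightarrow> ('v, 'p) block \<Rightarrow> bool" where
  "reaches b c \<longleftrightarrow> (b, c) \<in> {(x, y). y \<in> set (parents x)}\<^sup>*"

text \<open>The global common coin yields, for every round r, the ordered list leaders r of
leader validators of round r.  A slot is a pair (r, i) with i < length (leaders r), denoting
the pair (leaders r ! i, r); slots are ordered lexicographically.\<close>

type_synonym slot = "nat \<times> nat"

definition slot_ok :: "(nat \<Rightarrow> 'v list) \<Rightarrow> slot \<Rightarrow> bool" where
  "slot_ok leaders s \<longleftrightarrow> snd s < length (leaders (fst s))"

definition in_slot :: "(nat \<Rightarrow> 'v list) \<Rightarrow> slot \<Rightarrow> ('v, 'p) block \<Rightarrow> bool" where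
  "in_slot leaders s L \<longleftrightarrow> author L = leaders (fst s) ! snd s \<and> round L = fst s"

definition direct_skip ::
  "nat \<Rightarrow> nat \<Rightarrow> (nat \<Rightarrow> 'v list) \<Rightarrow> ('v, 'p) block set \<Rightarrow> slot \<Rightarrow> bool" where
  "direct_skip f w leaders D s \<longleftrightarrow>
     (\<exists>S \<subseteq> D. quorum f S \<and>
        (\<forall>b \<in> S. round b = fst s + w - 2 \<and> (\<forall>L. in_slot leaders s L \<longrightarrow> \<not> is_vote b L)))"

definition direct_commit ::
  "nat \<Rightarrow> nat \<Rightarrow> (nat \<Rightarrow> 'v list) \<Rightarrow> ('v, 'p) block set \<Rightarrow> slot \<Rightarrow> ('v, 'p) block \<Rightarrow> bool" where
  "direct_commit f w leaders D s L \<longleftrightarrow>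
     in_slot leaders s L \<and> (\<exists>S \<subseteq> D. quorum f S \<and> (\<forall>c \<in> S. is_cert f w c L))"

definition indirect_commit ::
  "nat \<Rightarrow> nat \<Rightarrow> (nat \<Rightarrow> 'v list) \<Rightarrow> ('v, 'p) block set \<Rightarrow> slot \<Rightarrow> ('v, 'p) block
     \<Rightarrow> ('v, 'p) block \<Rightarrow> bool" where
  "indirect_commit f w leaders D s A L \<longleftrightarrow>
     in_slot leaders s L \<and> (\<exists>c \<in> D. is_cert f w c L \<and> reaches A c)"

datatype ('v, 'p) status = Commit "('v, 'p) block" | Skip | Undecided

text \<open>Decision with a recursion-depth bound n (the indirect rule looks at strictly later
slots).  With n large enough (see status below) the bound is irrelevant.\<close>

primrec decide ::
  "nat \<Rightarrow> nat \<Rightarrow> (nat \<Rightarrow> 'v list) \<Rightarrow> ('v, 'p) block set \<Rightarrow> nat \<Rightarrow> slot \<Rightarrow> ('v, 'p) status"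
where
  "decide f w leaders D 0 s =
     (if direct_skip f w leaders D s then Skip
      else if \<exists>L. direct_commit f w leaders D s L
        then Commit (SOME L. direct_commit f w leaders D s L)
      else Undecided)"
| "decide f w leaders D (Suc n) s =
     (if direct_skip f w leaders D s then Skip
      else if \<exists>L. direct_commit f w leaders D s L
        then Commit (SOME L. direct_commit f w leaders D s L)
      else
        (let Anc = {s'. fst s + w - 1 < fst s' \<and> slot_ok leaders s'
                         \<and> decide f w leaders D n s' \<noteq> Skip}
         in if Anc = {} then Undecided
            else (case decide f w leaders D n (LEAST s'. s' \<in> Anc) of
                    Commit A \<Rightarrow>
                      (if \<exists>L. indirect_commit f w leaders D s A L
                       then Commit (SOME L. indirect_commit f w leaders D s A L)
                       else Skip)
                  | _ \<Rightarrow> Undecided)))"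

text \<open>Slots beyond the
highest round of D are undecided, and each indirect step moves at least w rounds up, so a
recursion depth of (highest round of D) + 1 suffices.\<close>

definition status ::
  "nat \<Rightarrow> nat \<Rightarrow> (nat \<Rightarrow> 'v list) \<Rightarrow> ('v, 'p) block set \<Rightarrow> slot \<Rightarrow> ('v, 'p) status" where
  "status f w leaders D s = decide f w leaders D (Suc (Sup (round ` D))) s"

end

theory Submission
  imports Defs
begin

text \<open>Quorum intersection.  A commit of a slot of round r, direct or indirect, needs a
certificate for the slot's leader block L, and the 2f+1 parents of that certificate are
round r+w-2 votes for L.  A direct skip needs 2f+1 blocks of the same round that are not votes
for L.  Two sets of 2f+1 authors among 3f+1 validators share f+1 of them, hence an honest one;
since honest validators do not equivocate, that author's block of round r+w-2 would be both a
vote and not a vote.\<close>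

lemma quorum_nonempty: "quorum f S \<Longrightarrow> S \<noteq> {}"
  unfolding quorum_def by auto

lemma honest_in_intersection:
  fixes A B Byz V :: "'v set"
  assumes "finite V" "card V = 3 * f + 1" "Byz \<subseteq> V" "card Byz \<le> f"
    and "A \<subseteq> V" "B \<subseteq> V" "2 * f + 1 \<le> card A" "2 * f + 1 \<le> card B"
  shows "\<exists>a \<in> A \<inter> B. a \<notin> Byz"
proof (rule ccontr)
  assume "\<not> ?thesis"
  then have "A \<inter> B \<subseteq> Byz" by blast
  then have "card (A \<inter> B) \<le> f"
    using assms(1,3,4) by (meson card_mono finite_subset le_trans)
  moreover have "card (A \<union> B) \<le> 3 * f + 1"
    using assms(1,2,5,6) by (metis card_mono le_sup_iff)
  moreover have "card (A \<union> B) + card (A \<inter> B) = card A + card B"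
    using assms(1,5,6) card_Un_Int[of A B] finite_subset by metis
  ultimately show False using assms(7,8) by linarith
qed

lemma quorums_share_honest_author:
  assumes "finite V" "card V = 3 * f + 1" "Byz \<subseteq> V" "card Byz \<le> f"
    and "author ` P \<subseteq> V" "author ` S \<subseteq> V" "quorum f P" "quorum f S"
  shows "\<exists>p \<in> P. \<exists>q \<in> S. author p = author q \<and> author p \<notin> Byz"
  using honest_in_intersection[OF assms(1-6)] assms(7,8) unfolding quorum_def by blast

lemma local_dag_authors:
  "local_dag V f D \<Longrightarrow> S \<subseteq> D \<Longrightarrow> author ` S \<subseteq> V"
  unfolding local_dag_def valid_block_def by blast

lemma decide_Commit_cases:
  assumes "decide f w leaders D n s = Commit b"
  shows "(\<exists>L. direct_commit f w leaders D s L) \<or> (\<exists>A L. indirect_commit f w leaders D s A L)"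
  using assms
  by (cases n) (auto simp: Let_def split: if_splits status.splits)

lemma decide_Commit_imp_cert:
  assumes "decide f w leaders D n s = Commit b"
  obtains L c where "in_slot leaders s L" "c \<in> D" "is_cert f w c L"
  using decide_Commit_cases[OF assms] quorum_nonempty
  unfolding direct_commit_def indirect_commit_def by blast

lemma cert_parents_vote_quorum:
  assumes "local_dag V f D" "c \<in> D" "is_cert f w c L" "2 \<le> w"
  obtains P where "P \<subseteq> D" "quorum f P"
    "\<forall>p \<in> P. round p = round L + w - 2 \<and> is_vote p L"
proof
  let ?P = "{p \<in> set (parents c). is_vote p L}"
  have "valid_block V f c" "set (parents c) \<subseteq> D"
    using assms(1,2) unfolding local_dag_def by auto
  moreover have "round c = round L + w - 1"
    using assms(3) unfolding is_cert_def by blast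
  ultimately show "\<forall>p \<in> ?P. round p = round L + w - 2 \<and> is_vote p L" "?P \<subseteq> D"
    using assms(4) unfolding valid_block_def by auto
  show "quorum f ?P"
    using assms(3) unfolding is_cert_def by blast
qed

theorem lemma3:
  fixes V Byz :: "'v set" and f w :: nat
    and leaders :: "nat \<Rightarrow> 'v list"
    and dag :: "'v \<Rightarrow> ('v, 'p) block set"
    and v1 v2 :: 'v and s :: slot and b :: "('v, 'p) block"
  assumes "finite V" and "card V = 3 * f + 1"
    and "Byz \<subseteq> V" and "card Byz \<le> f"
    and "w \<in> {4, 5}"
    and "\<forall>r. set (leaders r) \<subseteq> V"
    and "\<forall>x \<in> V - Byz. local_dag V f (dag x)"
    and "\<forall>x \<in> V - Byz. \<forall>y \<in> V - Byz. \<forall>b1 \<in> dag x. \<forall>b2 \<in> dag y.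
           author b1 \<in> V - Byz \<and> author b1 = author b2 \<and> round b1 = round b2 \<longrightarrow> b1 = b2"
    and "v1 \<in> V - Byz" and "v2 \<in> V - Byz"
    and "slot_ok leaders s"
    and "status f w leaders (dag v1) s = Commit b"
  shows "\<not> direct_skip f w leaders (dag v2) s"
proof
  assume "direct_skip f w leaders (dag v2) s"
  then obtain S where S: "S \<subseteq> dag v2" "quorum f S"
    "\<forall>q \<in> S. round q = fst s + w - 2 \<and> (\<forall>L. in_slot leaders s L \<longrightarrow> \<not> is_vote q L)"
    unfolding direct_skip_def by blast
  obtain L c where L: "in_slot leaders s L" and c: "c \<in> dag v1" "is_cert f w c L"
    using assms(12) decide_Commit_imp_cert unfolding status_def by metis
  have dags: "local_dag V f (dag v1)" "local_dag V f (dag v2)"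
    using assms(7,9,10) by auto
  have "2 \<le> w"
    using assms(5) by auto
  then obtain P where P: "P \<subseteq> dag v1" "quorum f P"
    "\<forall>p \<in> P. round p = round L + w - 2 \<and> is_vote p L"
    using cert_parents_vote_quorum[OF dags(1) c] by blast
  obtain p q where pq: "p \<in> P" "q \<in> S" "author p = author q" "author p \<notin> Byz"
    using quorums_share_honest_author[OF assms(1-4) local_dag_authors[OF dags(1) P(1)]
        local_dag_authors[OF dags(2) S(1)] P(2) S(2)] by blast
  have "author p \<in> V"
    using local_dag_authors[OF dags(1) P(1)] pq(1) by blast
  moreover have "round p = round q"
    using P(3) S(3) pq(1,2) L unfolding in_slot_def by simp
  ultimately have "p = q"
    using assms(8-10) P(1) S(1) pq by blast
  then show False
    using P(3) S(3) pq(1,2) L by blast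
qed

end
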